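(* Let $L:\mathbb{R}\to\mathbb{R}_{+}$ be a convex loss function with $L(0)=0$. Suppose there is some $\epsilon>0$ such that $L$ is linear (affine) on the interval $(0,2+\epsilon)$. Then $L$ is Fisher consistent for binary classification; that is, for every random pair $(X,Y)$ with $Y\in\{-1,1\}$ and every feature value $\mathbf{x}$, writing $p:=\Pr(Y=1\mid \mathbf{x})$ and $q:=\Pr(Y=-1\mid \mathbf{x})$, \[ \operatorname*{arg\,min}_{z\in\mathbb{R}} \mathbf{E}_{Y\mid \mathbf{x}}\, L(1-Yz)=\operatorname*{arg\,min}_{z\in\mathbb{R}} \big(p\,L(1-z)+q\,L(1+z)\big)= f^{*}_{Bayes}(\mathbf{x}), \] where $f^{*}_{Bayes}(\mathbf{x})=1$ if $p>q$ and $f^{*}_{Bayes}(\mathbf{x})=-1$ if $p<q$.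
   Context: Binary classification setting: features $\mathbf{X}\in\mathcal{X}\subseteq\mathbb{R}^d$ and labels $Y\in\{-1,1\}$. The Bayes classifier is $f^{*}_{Bayes}(\mathbf{x})=1$ if $\Pr(Y=1\mid\mathbf{x})>\Pr(Y=-1\mid\mathbf{x})$ and $f^{*}_{Bayes}(\mathbf{x})=-1$ if $\Pr(Y=1\mid\mathbf{x})<\Pr(Y=-1\mid\mathbf{x})$. A loss function $L$ is called Fisher consistent (classification calibrated) if $\operatorname{arg\,min}_{f:\mathcal{X}\to\mathbb{R}}\mathbf{E}_{X,Y}L(1-Yf(\mathbf{X}))$ is solved by the Bayes classifier; in the binary (SVM) setting this holds when, for all $\mathbf{x}\in\mathcal{X}$, $\operatorname{arg\,min}_{z\in\mathbb{R}}\mathbf{E}_{Y\mid\mathbf{x}}L(1-Yz)=f^{*}_{Bayes}(\mathbf{x})$, which is the condition stated in the claim. *)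

theory Defs
  imports "HOL-Analysis.Analysis"
begin

definition cond_risk :: "(real \<Rightarrow> real) \<Rightarrow> real \<Rightarrow> real \<Rightarrow> real \<Rightarrow> real" where
  "cond_risk L p q z = p * L (1 - z) + q * L (1 + z)"

definition f_bayes :: "real \<Rightarrow> real \<Rightarrow> real" where
  "f_bayes p q = (if p > q then 1 else if p < q then -1 else undefined)"

end

theory Submission
  imports Defs
begin

text \<open>A convex loss that is linear on (0, 2 + \<epsilon>) vanishes at 0, so by continuity it equals
  a t on [0, 2] with a = L 1 \<ge> 0, and convexity keeps it above the line a t everywhere. Together
  with L \<ge> 0 this shows that, for p \<ge> q, no score beats z = 1: below 1 the linear lower bound
  of p L(1 - z) + q L(1 + z) decreases in z, above 1 already q L(1 + z) exceeds q L 2. The case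
  p < q is the mirror image z \<mapsto> -z.\<close>

lemma convex_on_ge_affine_agreeing_on_interval:
  fixes f :: "real \<Rightarrow> real"
  assumes convex: "convex_on UNIV f" and "u < v"
    and affine: "\<And>t. t \<in> {u<..<v} \<Longrightarrow> f t = c * t + d"
  shows "c * t + d \<le> f t"
proof -
  define x y where "x = (2 * u + v) / 3" and "y = (u + 2 * v) / 3"
  have xy: "u < x" "x < y" "y < v"
    using \<open>u < v\<close> by (simp_all add: x_def y_def)
  have slope: "(f x - f y) / (x - y) = c"
    using xy affine[of x] affine[of y] by (simp add: field_simps)
  consider "t \<in> {u<..<v}" | "t \<le> u" | "v \<le> t"
    by fastforce
  then show ?thesis
  proof cases
    case 1
    then show ?thesis using affine by simp
  next
    case 2
    then have "(f t - f y) / (t - y) \<le> c"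
      using convex_on_slope_le(2)[OF convex, of t y x] xy slope by simp
    then show ?thesis
      using 2 xy affine[of y] by (simp add: divide_le_eq algebra_simps)
  next
    case 3
    then have "c \<le> (f x - f t) / (x - t)"
      using convex_on_slope_le(1)[OF convex, of x t y] xy slope by simp
    then show ?thesis
      using 3 xy affine[of x] by (simp add: le_divide_eq algebra_simps)
  qed
qed

lemma isCont_eq_affine_at_left_endpoint:
  fixes f :: "real \<Rightarrow> real"
  assumes cont: "isCont f u" and "u < v"
    and affine: "\<And>t. t \<in> {u<..<v} \<Longrightarrow> f t = c * t + d"
  shows "f u = c * u + d"
proof -
  have "eventually (\<lambda>t. f t = c * t + d) (at_right u)"
    unfolding eventually_at_right_field using \<open>u < v\<close> affine by (intro exI[of _ v]) auto
  moreover have "(f \<longlongrightarrow> f u) (at_right u)"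
    using cont by (simp add: isCont_def filterlim_at_split)
  ultimately have "((\<lambda>t. c * t + d) \<longlongrightarrow> f u) (at_right u)"
    by (simp add: tendsto_cong)
  moreover have "((\<lambda>t. c * t + d) \<longlongrightarrow> c * u + d) (at_right u)"
    by (intro tendsto_intros)
  ultimately show ?thesis
    by (rule tendsto_unique[OF trivial_limit_at_right_real])
qed

lemma cond_risk_uminus: "cond_risk L p q (- z) = cond_risk L q p z"
  by (simp add: cond_risk_def algebra_simps)

lemma cond_risk_ge_cond_risk_1:
  fixes L :: "real \<Rightarrow> real"
  assumes lower: "\<And>t. a * t \<le> L t" and nonneg: "\<And>t. 0 \<le> L t"
    and L0: "L 0 = 0" and L2: "L 2 = 2 * a"
    and a: "0 \<le> a" and q: "0 \<le> q" "q \<le> p"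
  shows "cond_risk L p q 1 \<le> cond_risk L p q z"
proof (cases "z \<le> 1")
  case True
  have "cond_risk L p q 1 = a * (p * (1 - z) + q * (1 + z)) - a * (p - q) * (1 - z)"
    by (simp add: cond_risk_def L0 L2 algebra_simps)
  also have "\<dots> \<le> a * (p * (1 - z) + q * (1 + z))"
    using True a q by simp
  also have "\<dots> = p * (a * (1 - z)) + q * (a * (1 + z))"
    by (simp add: algebra_simps)
  also have "\<dots> \<le> cond_risk L p q z"
    unfolding cond_risk_def using lower q
    by (intro add_mono mult_left_mono) auto
  finally show ?thesis .
next
  case False
  have "cond_risk L p q 1 = q * (a * 2)"
    by (simp add: cond_risk_def L0 L2)
  also have "\<dots> \<le> q * (a * (1 + z))"
    using False a q by (intro mult_left_mono) auto
  also have "\<dots> \<le> q * L (1 + z)"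
    using lower q by (intro mult_left_mono) auto
  also have "\<dots> \<le> cond_risk L p q z"
    unfolding cond_risk_def using nonneg q by simp
  finally show ?thesis .
qed

theorem theorem1:
  fixes L :: "real \<Rightarrow> real" and \<epsilon> p q :: real
  assumes convex: "convex_on UNIV L"
    and nonneg: "\<And>t. L t \<ge> 0"
    and L0: "L 0 = 0"
    and eps: "\<epsilon> > 0"
    and lin: "\<exists>a b. \<forall>t \<in> {0<..<2 + \<epsilon>}. L t = a * t + b"
    and p: "0 \<le> p" "p \<le> 1"
    and q: "q = 1 - p"
    and pq: "p \<noteq> q"
  shows "is_arg_min (cond_risk L p q) (\<lambda>_. True) (f_bayes p q)"
proof -
  obtain a b where ab: "\<And>t. t \<in> {0<..<2 + \<epsilon>} \<Longrightarrow> L t = a * t + b"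
    using lin by blast
  have "isCont L 0"
    using convex_on_continuous[OF open_UNIV convex] by (simp add: continuous_on_eq_continuous_at)
  then have "b = 0"
    using isCont_eq_affine_at_left_endpoint[OF _ _ ab] eps L0 by simp
  then have lower: "a * t \<le> L t" and L1: "L 1 = a" and L2: "L 2 = 2 * a" for t
    using convex_on_ge_affine_agreeing_on_interval[OF convex _ ab] ab eps by auto
  have "0 \<le> a"
    using nonneg[of 1] L1 by simp
  note risk_bound = cond_risk_ge_cond_risk_1[OF lower nonneg L0 L2 \<open>0 \<le> a\<close>]
  show ?thesis
  proof (cases "q < p")
    case True
    then show ?thesis
      using risk_bound[of q p] p q by (simp add: is_arg_min_def f_bayes_def not_less)
  next
    case False
    have "cond_risk L p q (- 1) \<le> cond_risk L p q z" for z
      using risk_bound[of p q "- z"] False p q by (simp add: cond_risk_uminus)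
    then show ?thesis
      using False pq by (simp add: is_arg_min_def f_bayes_def not_less)
  qed
qed

end
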